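(* Let $S, U, M \ge 1$ be integers and let $\mu_Q \in \mathbb{R}_{+}^{S \times U}$ with rows $\mu_{q^{(1)}}, \dots, \mu_{q^{(S)}} \in \mathbb{R}_+^{U}$. Let $\mathbb{N} = \{0,1,2,\dots\}$ and let $\preceq$ (resp. $\succeq$) denote entrywise $\le$ (resp. $\ge$). Say that a subset $\mathcal{M} \subseteq \{1,\dots,S\}$ \emph{suffices for minimum matching} if for every agent distribution $X \in \mathbb{N}^{M \times S}$ there exists $\hat X \in \mathbb{N}^{M \times S}$ whose columns indexed by $s \notin \mathcal{M}$ are identically zero and such that $X \mu_Q \preceq \hat X \mu_Q$. Then $\mathcal{M}$ suffices for minimum matching if and only if for every $\tilde s \in \{1,\dots,S\} \setminus \mathcal{M}$ there exist nonnegative integers $\alpha_{s\tilde s} \in \mathbb{N}$, $s \in \mathcal{M}$, with $$\sum_{s \in \mathcal{M}} \alpha_{s\tilde s}\, \mu_{q^{(s)}} \succeq \mu_{q^{(\tilde s)}}.$$ Consequently, the minspecies cardinality for minimum matching, $\mathcal{D}_{\mathcal{G}_2}(\mu_Q)$ (the minimum cardinality of a subset $\mathcal{M}$ that suffices for minimum matching), equals $$\min\Big\{ |\mathcal{M}_2| : \mathcal{M}_2 \subseteq \{1,\dots,S\},\ \forall \tilde s \notin \mathcal{M}_2\ \exists (\alpha_{s\tilde s})_{s\in\mathcal{M}_2} \in \mathbb{N}^{\mathcal{M}_2} \text{ with } \textstyle\sum_{s \in \mathcal{M}_2} \alpha_{s\tilde s}\, \mu_{q^{(s)}} \succeq \mu_{q^{(\tilde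 s)}} \Big\}.$$
   Context: A heterogeneous team consists of $S$ species; $\mu_Q$ is the expected species-trait matrix whose $(s,u)$ entry is the expected value of trait $u$ for an agent of species $s$. There are $M$ tasks; an agent distribution is a matrix $X \in \mathbb{N}^{M\times S}$ whose $(i,s)$ entry is the number of agents of species $s$ assigned to task $i$, and the resulting expected task-trait distribution is $X\mu_Q \in \mathbb{R}_+^{M\times U}$. The minimum-matching goal for a desired trait distribution $Y^*$ requires $Y^* \preceq X\mu_Q$ entrywise (over-provisioning allowed). The number of available agents per species is not bounded in this statement. *)

theory Defs
  imports "HOL-Analysis.Analysis"
begin

(* Species indexed by {0..<S}, traits by {0..<U}, tasks by {0..<M}.
   mu s u = expected value of trait u for species s  (the matrix mu_Q).
   An agent distribution X :: nat => nat => nat, X i s = #agents of species s on task i. *)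

definition task_trait :: "nat \<Rightarrow> (nat \<Rightarrow> nat \<Rightarrow> nat) \<Rightarrow> (nat \<Rightarrow> nat \<Rightarrow> real) \<Rightarrow> nat \<Rightarrow> nat \<Rightarrow> real" where
  "task_trait S X mu i u = (\<Sum>s<S. real (X i s) * mu s u)"

definition suffices_min_matching ::
  "nat \<Rightarrow> nat \<Rightarrow> nat \<Rightarrow> (nat \<Rightarrow> nat \<Rightarrow> real) \<Rightarrow> nat set \<Rightarrow> bool" where
  "suffices_min_matching S U M mu Ms \<longleftrightarrow>
     (\<forall>X :: nat \<Rightarrow> nat \<Rightarrow> nat. \<exists>Xh :: nat \<Rightarrow> nat \<Rightarrow> nat.
        (\<forall>i<M. \<forall>s<S. s \<notin> Ms \<longrightarrow> Xh i s = 0) \<and>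
        (\<forall>i<M. \<forall>u<U. task_trait S X mu i u \<le> task_trait S Xh mu i u))"

definition minspecies_min_matching ::
  "nat \<Rightarrow> nat \<Rightarrow> nat \<Rightarrow> (nat \<Rightarrow> nat \<Rightarrow> real) \<Rightarrow> nat" where
  "minspecies_min_matching S U M mu =
     (LEAST k. \<exists>Ms. Ms \<subseteq> {..<S} \<and> suffices_min_matching S U M mu Ms \<and> card Ms = k)"

definition int_dominated :: "nat \<Rightarrow> nat \<Rightarrow> (nat \<Rightarrow> nat \<Rightarrow> real) \<Rightarrow> nat set \<Rightarrow> bool" where
  "int_dominated S U mu Ms \<longleftrightarrow>
     (\<forall>st<S. st \<notin> Ms \<longrightarrow> (\<exists>alpha :: nat \<Rightarrow> nat.
        \<forall>u<U. (\<Sum>s\<in>Ms. real (alpha s) * mu s u) \<ge> mu st u))"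

end

theory Submission
  imports Defs
begin

text \<open>If every species outside \<open>Ms\<close> is dominated by a nonnegative integer combination
  \<open>\<alpha>\<close> of species in \<open>Ms\<close>, replace each agent of an outside species \<open>t\<close> by \<open>\<alpha> t s\<close>
  agents of every species \<open>s \<in> Ms\<close>; this can only increase every task trait.
  Conversely, testing sufficiency on a single agent of an outside species yields the
  dominating combination.\<close>

lemma task_trait_supported:
  assumes "Ms \<subseteq> {..<S}" and "\<forall>s<S. s \<notin> Ms \<longrightarrow> X i s = 0"
  shows "task_trait S X mu i u = (\<Sum>s\<in>Ms. real (X i s) * mu s u)"
  unfolding task_trait_def
  by (rule sum.mono_neutral_right) (use assms in auto)

lemma task_trait_single_species:
  assumes "st < S"
  shows "task_trait S (\<lambda>i s. if s = st then 1 else 0) mu i u = mu st u"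
proof -
  have "(\<Sum>s<S. real (if s = st then 1 else 0) * mu s u) = (\<Sum>s<S. if s = st then mu s u else 0)"
    by (rule sum.cong) auto
  then show ?thesis
    unfolding task_trait_def using assms by simp
qed

lemma int_dominated_imp_suffices_min_matching:
  assumes Ms: "Ms \<subseteq> {..<S}" and dom: "int_dominated S U mu Ms"
  shows "suffices_min_matching S U M mu Ms"
  unfolding suffices_min_matching_def
proof
  fix X :: "nat \<Rightarrow> nat \<Rightarrow> nat"
  obtain \<alpha> :: "nat \<Rightarrow> nat \<Rightarrow> nat" where \<alpha>:
    "\<And>t u. t < S \<Longrightarrow> t \<notin> Ms \<Longrightarrow> u < U \<Longrightarrow> mu t u \<le> (\<Sum>s\<in>Ms. real (\<alpha> t s) * mu s u)"
    using dom unfolding int_dominated_def by metis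
  define T where "T = {..<S} - Ms"
  have fin: "finite Ms" "finite T"
    using Ms finite_subset unfolding T_def by auto
  have partition: "{..<S} = Ms \<union> T" "Ms \<inter> T = {}"
    using Ms unfolding T_def by auto
  define Xh where "Xh i s = (if s \<in> Ms then X i s + (\<Sum>t\<in>T. X i t * \<alpha> t s) else 0)" for i s
  have Xh_supported: "\<forall>s<S. s \<notin> Ms \<longrightarrow> Xh i s = 0" for i
    by (simp add: Xh_def)
  have "task_trait S X mu i u \<le> task_trait S Xh mu i u" if u: "u < U" for i u
  proof -
    have "task_trait S X mu i u
        = (\<Sum>s\<in>Ms. real (X i s) * mu s u) + (\<Sum>t\<in>T. real (X i t) * mu t u)"
      unfolding task_trait_def partition(1) using fin partition(2) by (simp add: sum.union_disjoint)
    also have "(\<Sum>t\<in>T. real (X i t) * mu t u)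
        \<le> (\<Sum>t\<in>T. real (X i t) * (\<Sum>s\<in>Ms. real (\<alpha> t s) * mu s u))"
      by (rule sum_mono, rule mult_left_mono, rule \<alpha>) (use u in \<open>auto simp: T_def\<close>)
    also have "\<dots> = (\<Sum>s\<in>Ms. (\<Sum>t\<in>T. real (X i t * \<alpha> t s)) * mu s u)"
      by (simp add: sum_distrib_left sum_distrib_right mult.assoc mult.left_commute sum.swap[of _ T])
    also have "(\<Sum>s\<in>Ms. real (X i s) * mu s u) + \<dots> = (\<Sum>s\<in>Ms. real (Xh i s) * mu s u)"
      by (simp add: Xh_def sum.distrib[symmetric] distrib_right)
    also have "\<dots> = task_trait S Xh mu i u"
      using task_trait_supported[OF Ms Xh_supported] by simp
    finally show ?thesis by simp
  qed
  then show "\<exists>Xh. (\<forall>i<M. \<forall>s<S. s \<notin> Ms \<longrightarrow> Xh i s = 0) \<and>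
      (\<forall>i<M. \<forall>u<U. task_trait S X mu i u \<le> task_trait S Xh mu i u)"
    using Xh_supported by blast
qed

lemma suffices_min_matching_imp_int_dominated:
  assumes Ms: "Ms \<subseteq> {..<S}" and "M \<ge> 1" and suff: "suffices_min_matching S U M mu Ms"
  shows "int_dominated S U mu Ms"
  unfolding int_dominated_def
proof (intro allI impI)
  fix st assume st: "st < S" "st \<notin> Ms"
  obtain Xh :: "nat \<Rightarrow> nat \<Rightarrow> nat" where
    supported_all: "\<forall>i<M. \<forall>s<S. s \<notin> Ms \<longrightarrow> Xh i s = 0" and
    covers_all: "\<forall>i<M. \<forall>u<U. task_trait S (\<lambda>i s. if s = st then 1 else 0) mu i u
                                  \<le> task_trait S Xh mu i u"
    using suff unfolding suffices_min_matching_def by blast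
  have "0 < M" using \<open>M \<ge> 1\<close> by simp
  then have supported: "\<forall>s<S. s \<notin> Ms \<longrightarrow> Xh 0 s = 0" and
    covers: "\<forall>u<U. task_trait S (\<lambda>i s. if s = st then 1 else 0) mu 0 u \<le> task_trait S Xh mu 0 u"
    using supported_all covers_all by simp_all
  have "\<forall>u<U. (\<Sum>s\<in>Ms. real (Xh 0 s) * mu s u) \<ge> mu st u"
    using covers task_trait_single_species[OF st(1)] task_trait_supported[where X = Xh and i = 0, OF Ms supported]
    by simp
  then show "\<exists>\<alpha>. \<forall>u<U. (\<Sum>s\<in>Ms. real (\<alpha> s) * mu s u) \<ge> mu st u" by blast
qed

lemma suffices_min_matching_iff_int_dominated:
  assumes "Ms \<subseteq> {..<S}" and "M \<ge> 1"
  shows "suffices_min_matching S U M mu Ms \<longleftrightarrow> int_dominated S U mu Ms"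
  using assms int_dominated_imp_suffices_min_matching suffices_min_matching_imp_int_dominated
  by blast

theorem proposition2:
  fixes S U M :: nat and mu :: "nat \<Rightarrow> nat \<Rightarrow> real"
  assumes "S \<ge> 1" and "U \<ge> 1" and "M \<ge> 1"
    and "\<forall>s<S. \<forall>u<U. mu s u \<ge> 0"
  shows "(\<forall>Ms. Ms \<subseteq> {..<S} \<longrightarrow>
            (suffices_min_matching S U M mu Ms \<longleftrightarrow> int_dominated S U mu Ms))
       \<and> minspecies_min_matching S U M mu =
           (LEAST k. \<exists>Ms. Ms \<subseteq> {..<S} \<and> int_dominated S U mu Ms \<and> card Ms = k)"
proof -
  have iff: "\<forall>Ms. Ms \<subseteq> {..<S} \<longrightarrow>
      (suffices_min_matching S U M mu Ms \<longleftrightarrow> int_dominated S U mu Ms)"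
    using suffices_min_matching_iff_int_dominated \<open>M \<ge> 1\<close> by blast
  then have "(\<lambda>k. \<exists>Ms. Ms \<subseteq> {..<S} \<and> suffices_min_matching S U M mu Ms \<and> card Ms = k)
      = (\<lambda>k. \<exists>Ms. Ms \<subseteq> {..<S} \<and> int_dominated S U mu Ms \<and> card Ms = k)"
    by blast
  then show ?thesis
    using iff unfolding minspecies_min_matching_def by simp
qed

end
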